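(* Let $\alpha:X\to P(A\times X+1)$ be a discrete probabilistic transition system, $\langle\!\langle-\rangle\!\rangle:X\to\mathcal M(A^\infty)$ its trace semantics, and $\beta$ and $\varphi_\beta$ as in the context. Then for all $x,y\in X$: $\langle\!\langle x\rangle\!\rangle=\langle\!\langle y\rangle\!\rangle$ if and only if $\varphi_\beta(\delta_x)=\varphi_\beta(\delta_y)$.
   Context: $X$ a set, $A$ a finite alphabet, $1=\{*\}$, $\mathbb I=[0,1]$; $P(Y)$ is the set of finitely supported probability distributions on $Y$; $\delta_x$ the point mass at $x$. $A^\infty=A^*\cup A^\omega$ with $\sigma$-algebra generated by $\{\emptyset\}\cup\{\{w\}\mid w\in A^*\}\cup\{wA^\infty\mid w\in A^*\}$, and $\mathcal M(A^\infty)$ is the set of sub-probability measures on it. The trace semantics $\langle\!\langle x\rangle\!\rangle\in\mathcal M(A^\infty)$ is the unique family of measures with $\langle\!\langle x\rangle\!\rangle(A^\infty)=1$, $\langle\!\langle x\rangle\!\rangle(\{\varepsilon\})=\alpha(x)( * )$, $\langle\!\langle x\rangle\!\rangle(awA^\infty)=\sum_y\alpha(x)(a,y)\langle\!\langle y\rangle\!\rangle(wA^\infty)$, $\langle\!\langle x\rangle\!\rangle(\{aw\})=\sum_y\alpha(x)(a,y)\langle\!\langle y\rangle\!\rangle(\{w\})$. Let $\mathbb R^X_\omega$ be the real vector space of finitely supported functions $X\to\mathbb R$, and $\beta=\langle\beta_1,\beta_*,a\mapsto\tau_a\rangle:\mathbb R^X_\omega\to\mathbb R\times\mathbb R\times(\mathbb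 R^X_\omega)^A$ the linear maps $\beta_1(u)=\sum_{x}u(x)\sum_{z\in A\times X+1}\alpha(x)(z)=\sum_x u(x)$, $\beta_*(u)=\sum_x u(x)\alpha(x)( * )$, $\tau_a(u)(y)=\sum_x u(x)\alpha(x)(a,y)$. $\varphi_\beta:\mathbb R^X_\omega\to(\mathbb R\times\mathbb R)^{A^*}$ is the map $\varphi_\beta(u)(\varepsilon)=(\beta_1(u),\beta_*(u))$, $\varphi_\beta(u)(aw)=\varphi_\beta(\tau_a(u))(w)$ (the final-coalgebra morphism for the functor $Y\mapsto\mathbb R\times\mathbb R\times Y^A$). *)

theory Defs
  imports "HOL-Probability.Probability" "HOL-Library.Stream"
begin

text \<open>A discrete probabilistic transition system over alphabet 'a and states 'x is
  alpha :: 'x => ('a * 'x) option pmf with finite supports; None plays the role of *.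
  A^infinity = A^* + A^omega is modelled as 'a list + 'a stream.\<close>

definition cyl :: "'a list \<Rightarrow> ('a list + 'a stream) set" where
  "cyl w = {Inl v | v. take (length w) v = w} \<union> {Inr s | s. stake (length w) s = w}"

definition ainf_gens :: "('a list + 'a stream) set set" where
  "ainf_gens = {{}} \<union> {{Inl w} | w. True} \<union> {cyl w | w. True}"

definition ainf :: "('a list + 'a stream) measure" where
  "ainf = sigma UNIV ainf_gens"

definition is_trace_semantics ::
  "('x \<Rightarrow> ('a \<times> 'x) option pmf) \<Rightarrow> ('x \<Rightarrow> ('a list + 'a stream) measure) \<Rightarrow> bool" where
  "is_trace_semantics alpha tr \<longleftrightarrow>
    (\<forall>x. sets (tr x) = sets ainf \<and> subprob_space (tr x)
      \<and> emeasure (tr x) (space ainf) = 1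
      \<and> emeasure (tr x) {Inl []} = ennreal (pmf (alpha x) None)
      \<and> (\<forall>a w. emeasure (tr x) (cyl (a # w)) =
            (\<Sum>y\<in>{y. Some (a, y) \<in> set_pmf (alpha x)}.
               ennreal (pmf (alpha x) (Some (a, y))) * emeasure (tr y) (cyl w)))
      \<and> (\<forall>a w. emeasure (tr x) {Inl (a # w)} =
            (\<Sum>y\<in>{y. Some (a, y) \<in> set_pmf (alpha x)}.
               ennreal (pmf (alpha x) (Some (a, y))) * emeasure (tr y) {Inl w})))"

definition supp_fun :: "('x \<Rightarrow> real) \<Rightarrow> 'x set" where
  "supp_fun u = {x. u x \<noteq> 0}"

definition beta1 :: "('x \<Rightarrow> ('a \<times> 'x) option pmf) \<Rightarrow> ('x \<Rightarrow> real) \<Rightarrow> real" where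
  "beta1 alpha u = (\<Sum>x\<in>supp_fun u. u x * (\<Sum>z\<in>set_pmf (alpha x). pmf (alpha x) z))"

definition beta_star :: "('x \<Rightarrow> ('a \<times> 'x) option pmf) \<Rightarrow> ('x \<Rightarrow> real) \<Rightarrow> real" where
  "beta_star alpha u = (\<Sum>x\<in>supp_fun u. u x * pmf (alpha x) None)"

definition tau :: "('x \<Rightarrow> ('a \<times> 'x) option pmf) \<Rightarrow> 'a \<Rightarrow> ('x \<Rightarrow> real) \<Rightarrow> 'x \<Rightarrow> real" where
  "tau alpha a u y = (\<Sum>x\<in>supp_fun u. u x * pmf (alpha x) (Some (a, y)))"

fun phi_beta :: "('x \<Rightarrow> ('a \<times> 'x) option pmf) \<Rightarrow> ('x \<Rightarrow> real) \<Rightarrow> 'a list \<Rightarrow> real \<times> real" where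
  "phi_beta alpha u [] = (beta1 alpha u, beta_star alpha u)"
| "phi_beta alpha u (a # w) = phi_beta alpha (tau alpha a u) w"

definition delta :: "'x \<Rightarrow> 'x \<Rightarrow> real" where
  "delta x = (\<lambda>z. if z = x then 1 else 0)"

end

theory Submission
  imports Defs
begin

text \<open>Unfolding the recursion of \<open>\<phi>\<^sub>\<beta>\<close> along a word \<open>w\<close> shows that
  \<open>\<phi>\<^sub>\<beta>(u)(w)\<close> is the \<open>u\<close>-weighted sum of the trace measures of the cylinder
  \<open>w A\<^sup>\<infinity>\<close> and of the singleton \<open>{w}\<close>; for \<open>u = \<delta>\<^sub>x\<close> these are just the measures
  of these two sets under \<open>\<langle>\<langle>x\<rangle>\<rangle>\<close>. The sets form an intersection-stable generator of
  the \<open>\<sigma>\<close>-algebra of \<open>A\<^sup>\<infinity>\<close> containing the whole space, so two finite measures agreeing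
  on them are equal.\<close>

lemma cyl_Nil: "cyl [] = UNIV"
  unfolding cyl_def by (auto intro: sum.exhaust)

lemma Inl_in_cyl_iff: "Inl u \<in> cyl v \<longleftrightarrow> take (length v) u = v"
  and Inr_in_cyl_iff: "Inr s \<in> cyl v \<longleftrightarrow> stake (length v) s = v"
  unfolding cyl_def by auto

lemma cyl_Int_cyl:
  assumes "length v \<le> length w"
  shows "cyl v \<inter> cyl w = (if take (length v) w = v then cyl w else {})"
proof -
  have "z \<in> cyl v \<longleftrightarrow> take (length v) w = v" if "z \<in> cyl w" for z
  proof (cases z)
    case (Inl u)
    with that have "take (length w) u = w" by (simp add: Inl_in_cyl_iff)
    then have "take (length v) u = take (length v) w"
      using assms by (metis min.absorb1 take_take)
    then show ?thesis using Inl by (simp add: Inl_in_cyl_iff)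
  next
    case (Inr s)
    with that have "stake (length w) s = w" by (simp add: Inr_in_cyl_iff)
    then have "stake (length v) s = take (length v) w"
      using assms by (metis min.absorb1 take_stake)
    then show ?thesis using Inr by (simp add: Inr_in_cyl_iff)
  qed
  then show ?thesis by auto
qed

lemma Int_stable_ainf_gens: "Int_stable ainf_gens"
proof (rule Int_stableI)
  have cyl_Int: "cyl v \<inter> cyl w \<in> ainf_gens" for v w :: "'a list"
    using cyl_Int_cyl[of v w] cyl_Int_cyl[of w v]
    by (cases "length v \<le> length w") (auto simp: ainf_gens_def Int_commute)
  have Inl_Int: "{Inl v} \<inter> cyl w \<in> ainf_gens" for v w :: "'a list"
    by (cases "Inl v \<in> cyl w") (auto simp: ainf_gens_def)
  fix A B :: "('a list + 'a stream) set"
  assume "A \<in> ainf_gens" "B \<in> ainf_gens"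
  then show "A \<inter> B \<in> ainf_gens"
    unfolding ainf_gens_def
    by (elim UnE CollectE exE conjE singletonE)
       (use cyl_Int Inl_Int in \<open>auto simp: ainf_gens_def Int_commute\<close>)
qed

lemma sets_ainf: "sets ainf = sigma_sets UNIV ainf_gens"
  unfolding ainf_def by (rule sets_measure_of) simp

lemma measure_eq_sum_of_emeasure_eq_sum:
  assumes "finite_measure M" "\<And>y. y \<in> S \<Longrightarrow> finite_measure (N y)" "\<And>y. y \<in> S \<Longrightarrow> p y \<ge> 0"
    and "emeasure M A = (\<Sum>y\<in>S. ennreal (p y) * emeasure (N y) (B y))"
  shows "measure M A = (\<Sum>y\<in>S. p y * measure (N y) (B y))"
proof -
  have "ennreal (measure M A) = (\<Sum>y\<in>S. ennreal (p y * measure (N y) (B y)))"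
    using assms by (simp add: finite_measure.emeasure_eq_measure ennreal_mult)
  also have "\<dots> = ennreal (\<Sum>y\<in>S. p y * measure (N y) (B y))"
    using assms(3) by (intro sum_ennreal) simp
  finally show ?thesis
    using assms(3) by (subst (asm) ennreal_inj) (auto intro!: sum_nonneg)
qed

abbreviation successors :: "('x \<Rightarrow> ('a \<times> 'x) option pmf) \<Rightarrow> 'a \<Rightarrow> 'x \<Rightarrow> 'x set" where
  "successors alpha a x \<equiv> {y. Some (a, y) \<in> set_pmf (alpha x)}"

lemma finite_successors:
  assumes "finite (set_pmf (alpha x))"
  shows "finite (successors alpha a x)"
proof -
  have "successors alpha a x \<subseteq> (\<lambda>z. snd (the z)) ` set_pmf (alpha x)"
    by (auto intro!: image_eqI)
  then show ?thesis using assms finite_surj by blast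
qed

lemma supp_fun_tau_subset: "supp_fun (tau alpha a u) \<subseteq> (\<Union>x\<in>supp_fun u. successors alpha a x)"
proof
  fix y assume "y \<in> supp_fun (tau alpha a u)"
  then obtain x where "x \<in> supp_fun u" "u x * pmf (alpha x) (Some (a, y)) \<noteq> 0"
    unfolding supp_fun_def tau_def using sum.not_neutral_contains_not_neutral by blast
  then show "y \<in> (\<Union>x\<in>supp_fun u. successors alpha a x)"
    by (auto simp: set_pmf_iff)
qed

lemma supp_fun_delta: "supp_fun (delta x) = {x}"
  by (auto simp: supp_fun_def delta_def)

locale trace_system =
  fixes alpha :: "'x \<Rightarrow> ('a \<times> 'x) option pmf"
    and tr :: "'x \<Rightarrow> ('a list + 'a stream) measure"
  assumes finite_set_pmf: "\<And>x. finite (set_pmf (alpha x))"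
    and trace_semantics: "is_trace_semantics alpha tr"
begin

lemma finite_measure_tr: "finite_measure (tr x)"
  using trace_semantics by (auto simp: is_trace_semantics_def subprob_space_def)

lemma sets_tr: "sets (tr x) = sigma_sets UNIV ainf_gens"
  using trace_semantics by (simp add: is_trace_semantics_def sets_ainf)

lemma measure_tr_UNIV: "measure (tr x) UNIV = 1"
proof -
  have "emeasure (tr x) (space ainf) = 1"
    using trace_semantics unfolding is_trace_semantics_def by blast
  then show ?thesis
    by (simp add: ainf_def finite_measure_tr finite_measure.emeasure_eq_measure)
qed

lemma measure_tr_Nil: "measure (tr x) {Inl []} = pmf (alpha x) None"
proof -
  have "emeasure (tr x) {Inl []} = ennreal (pmf (alpha x) None)"
    using trace_semantics unfolding is_trace_semantics_def by blast
  then show ?thesis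
    by (simp add: finite_measure_tr finite_measure.emeasure_eq_measure)
qed

lemma measure_tr_cyl_Cons:
  "measure (tr x) (cyl (a # w)) =
     (\<Sum>y\<in>successors alpha a x. pmf (alpha x) (Some (a, y)) * measure (tr y) (cyl w))"
proof (rule measure_eq_sum_of_emeasure_eq_sum[OF finite_measure_tr finite_measure_tr])
  show "emeasure (tr x) (cyl (a # w)) =
     (\<Sum>y\<in>successors alpha a x. ennreal (pmf (alpha x) (Some (a, y))) * emeasure (tr y) (cyl w))"
    using trace_semantics unfolding is_trace_semantics_def by blast
qed simp

lemma measure_tr_Inl_Cons:
  "measure (tr x) {Inl (a # w)} =
     (\<Sum>y\<in>successors alpha a x. pmf (alpha x) (Some (a, y)) * measure (tr y) {Inl w})"
proof (rule measure_eq_sum_of_emeasure_eq_sum[OF finite_measure_tr finite_measure_tr])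
  show "emeasure (tr x) {Inl (a # w)} =
     (\<Sum>y\<in>successors alpha a x. ennreal (pmf (alpha x) (Some (a, y))) * emeasure (tr y) {Inl w})"
    using trace_semantics unfolding is_trace_semantics_def by blast
qed simp

lemma finite_supp_fun_tau:
  assumes "finite (supp_fun u)"
  shows "finite (supp_fun (tau alpha a u))"
  by (rule finite_subset[OF supp_fun_tau_subset])
     (intro finite_UN_I assms finite_successors finite_set_pmf)

lemma sum_tau:
  assumes fin_u: "finite (supp_fun u)"
  shows "(\<Sum>y\<in>supp_fun (tau alpha a u). tau alpha a u y * f y) =
    (\<Sum>x\<in>supp_fun u. u x * (\<Sum>y\<in>successors alpha a x. pmf (alpha x) (Some (a, y)) * f y))"
proof -
  define T where "T = (\<Union>x\<in>supp_fun u. successors alpha a x)"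
  have fin_T: "finite T"
    unfolding T_def by (intro finite_UN_I fin_u finite_successors finite_set_pmf)
  have "(\<Sum>y\<in>supp_fun (tau alpha a u). tau alpha a u y * f y) = (\<Sum>y\<in>T. tau alpha a u y * f y)"
    using supp_fun_tau_subset[of alpha a u]
    by (intro sum.mono_neutral_left[OF fin_T]) (auto simp: T_def supp_fun_def)
  also have "\<dots> = (\<Sum>x\<in>supp_fun u. u x * (\<Sum>y\<in>T. pmf (alpha x) (Some (a, y)) * f y))"
    by (simp add: tau_def sum_distrib_right sum_distrib_left mult.assoc sum.swap[of _ T])
  also have "\<dots> = (\<Sum>x\<in>supp_fun u. u x * (\<Sum>y\<in>successors alpha a x. pmf (alpha x) (Some (a, y)) * f y))"
    by (intro sum.cong refl arg_cong2[where f = "(*)"] sum.mono_neutral_right[OF fin_T])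
       (auto simp: T_def set_pmf_iff)
  finally show ?thesis .
qed

lemma phi_beta_eq_weighted_measures:
  assumes "finite (supp_fun u)"
  shows "phi_beta alpha u w =
    ((\<Sum>x\<in>supp_fun u. u x * measure (tr x) (cyl w)),
     (\<Sum>x\<in>supp_fun u. u x * measure (tr x) {Inl w}))"
  using assms
proof (induction w arbitrary: u)
  case Nil
  have "(\<Sum>z\<in>set_pmf (alpha x). pmf (alpha x) z) = 1" for x
    using finite_set_pmf sum_pmf_eq_1 by blast
  then show ?case
    by (simp add: beta1_def beta_star_def cyl_Nil measure_tr_UNIV measure_tr_Nil)
next
  case (Cons a w)
  have "phi_beta alpha u (a # w) = phi_beta alpha (tau alpha a u) w"
    by simp
  also have "\<dots> = ((\<Sum>x\<in>supp_fun (tau alpha a u). tau alpha a u x * measure (tr x) (cyl w)),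
      (\<Sum>x\<in>supp_fun (tau alpha a u). tau alpha a u x * measure (tr x) {Inl w}))"
    by (rule Cons.IH[OF finite_supp_fun_tau[OF Cons.prems]])
  also have "\<dots> = ((\<Sum>x\<in>supp_fun u. u x * measure (tr x) (cyl (a # w))),
      (\<Sum>x\<in>supp_fun u. u x * measure (tr x) {Inl (a # w)}))"
    by (simp only: sum_tau[OF Cons.prems] measure_tr_cyl_Cons measure_tr_Inl_Cons)
  finally show ?case .
qed

lemma phi_beta_delta: "phi_beta alpha (delta x) w = (measure (tr x) (cyl w), measure (tr x) {Inl w})"
  using phi_beta_eq_weighted_measures[of "delta x" w] by (simp add: supp_fun_delta) (simp add: delta_def)

lemma tr_eqI:
  assumes cyl: "\<And>w. measure (tr x) (cyl w) = measure (tr y) (cyl w)"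
    and Inl: "\<And>w. measure (tr x) {Inl w} = measure (tr y) {Inl w}"
  shows "tr x = tr y"
proof (rule measure_eqI_generator_eq[OF Int_stable_ainf_gens _ _ sets_tr sets_tr, where A = "\<lambda>_. UNIV"])
  fix X :: "('a list + 'a stream) set"
  assume "X \<in> ainf_gens"
  then consider "X = {}" | w where "X = {Inl w}" | w where "X = cyl w"
    unfolding ainf_gens_def by blast
  then show "emeasure (tr x) X = emeasure (tr y) X"
    by cases (simp_all add: finite_measure_tr finite_measure.emeasure_eq_measure cyl Inl)
next
  show "range (\<lambda>_. UNIV) \<subseteq> ainf_gens"
    by (auto simp: ainf_gens_def cyl_Nil[symmetric])
qed (simp_all add: finite_measure_tr finite_measure.emeasure_eq_measure)

lemma tr_eq_iff_phi_beta_delta_eq: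
  "tr x = tr y \<longleftrightarrow> phi_beta alpha (delta x) = phi_beta alpha (delta y)"
proof
  assume "phi_beta alpha (delta x) = phi_beta alpha (delta y)"
  then have "(measure (tr x) (cyl w), measure (tr x) {Inl w}) =
             (measure (tr y) (cyl w), measure (tr y) {Inl w})" for w
    by (metis phi_beta_delta)
  then show "tr x = tr y"
    by (intro tr_eqI) simp_all
qed (simp add: fun_eq_iff phi_beta_delta)

end

theorem mainTheorem16:
  fixes alpha :: "'x \<Rightarrow> ('a::finite \<times> 'x) option pmf"
    and tr :: "'x \<Rightarrow> ('a list + 'a stream) measure"
    and x y :: 'x
  assumes "\<forall>x. finite (set_pmf (alpha x))"
    and "is_trace_semantics alpha tr"
  shows "tr x = tr y \<longleftrightarrow> phi_beta alpha (delta x) = phi_beta alpha (delta y)"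
proof -
  interpret trace_system alpha tr
    using assms by unfold_locales simp_all
  show ?thesis
    by (rule tr_eq_iff_phi_beta_delta_eq)
qed

end
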